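(* Let $r>0$ and let $S$ be a finite set of sites in $\mathbb{H}^2$ with pairwise hyperbolic distance at least $2r$. Then every inner vertex of the Delaunay complex $\mathcal{D}(S)$ (i.e., every site whose Voronoi cell is bounded) has degree at least $e^r$ in $\mathcal{D}(S)$.
   Context: $\mathbb{H}^2$ is the hyperbolic plane of curvature $-1$. For a finite $S\subset\mathbb{H}^2$, the Voronoi cell of $s\in S$ is the set of points of $\mathbb{H}^2$ closer to $s$ than to any other site. The Delaunay complex $\mathcal{D}(S)$ is the graph on $S$ in which two sites are adjacent iff their Voronoi cells share a boundary segment of positive length (a Voronoi edge); it is a plane graph when each edge is drawn through a point of the shared Voronoi edge, and a site is an outer vertex (lies on the unbounded face) iff its Voronoi cell is unbounded. *)

theory Defs
  imports "HOL-Analysis.Analysis"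
begin

text \<open>Upper half-plane model of the hyperbolic plane of curvature -1.\<close>

definition hplane :: "complex set" where
  "hplane = {z. Im z > 0}"

definition hdist :: "complex \<Rightarrow> complex \<Rightarrow> real" where
  "hdist z w = arcosh (1 + (cmod (z - w))\<^sup>2 / (2 * Im z * Im w))"

definition voronoi_cell :: "complex set \<Rightarrow> complex \<Rightarrow> complex set" where
  "voronoi_cell S s = {p \<in> hplane. \<forall>t\<in>S. t \<noteq> s \<longrightarrow> hdist p s < hdist p t}"

definition hbounded :: "complex set \<Rightarrow> bool" where
  "hbounded A \<longleftrightarrow> (\<exists>c\<in>hplane. \<exists>R. \<forall>p\<in>A. hdist c p \<le> R)"

text \<open>Common boundary of two Voronoi cells (inside the hyperbolic plane; the topology of
  the half-plane model is the subspace topology of the complex plane).\<close>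
definition common_boundary :: "complex set \<Rightarrow> complex \<Rightarrow> complex \<Rightarrow> complex set" where
  "common_boundary S s t = closure (voronoi_cell S s) \<inter> closure (voronoi_cell S t) \<inter> hplane"

text \<open>Delaunay adjacency: the cells share a boundary segment of positive length.
  The common boundary is a convex subset of the bisector geodesic, so it has positive
  length iff it is infinite.\<close>
definition delaunay_adj :: "complex set \<Rightarrow> complex \<Rightarrow> complex \<Rightarrow> bool" where
  "delaunay_adj S s t \<longleftrightarrow> s \<in> S \<and> t \<in> S \<and> s \<noteq> t \<and> infinite (common_boundary S s t)"

definition delaunay_degree :: "complex set \<Rightarrow> complex \<Rightarrow> nat" where
  "delaunay_degree S s = card {t \<in> S. delaunay_adj S s t}"

end

(*
  Move s to the centre 0 of the Poincare disk. Walking from 0 along the ray of direction theta one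
  must leave the bounded cell of s, through the bisector of 0 and the disk position v of another
  site. For all but countably many theta the first bisector met belongs to a unique site t; then t
  is a Delaunay neighbour of s, and Re (e^(i theta) conj v) >= |v|^2, i.e.
  cos (theta - arg v) >= |v|. Separation gives |v| >= tanh r = cos (2 arctan e^(-r)), so theta lies
  within 2 e^(-r) of arg v modulo 2 pi. Hence arcs of length 4 e^(-r) around the arguments of the
  neighbours cover the circle up to a null set, and the degree is at least pi e^r / 2 > e^r.
*)
theory Submission
  imports Defs
begin

section \<open>Poincare disk coordinates\<close>

(* The Cayley transform of the unit disk onto hplane sending 0 to a + b i; in these coordinates
   the cosh of the hyperbolic distance is 1 + disk_kernel. *)
definition from_disk :: "real \<Rightarrow> real \<Rightarrow> complex \<Rightarrow> complex" where
  "from_disk a b w = of_real a + of_real b * \<i> * ((1 + w) / (1 - w))"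

definition to_disk :: "real \<Rightarrow> real \<Rightarrow> complex \<Rightarrow> complex" where
  "to_disk a b z = ((z - of_real a) / of_real b - \<i>) / ((z - of_real a) / of_real b + \<i>)"

definition disk_kernel :: "complex \<Rightarrow> complex \<Rightarrow> real" where
  "disk_kernel w v = 2 * (cmod (w - v))\<^sup>2 / ((1 - (cmod w)\<^sup>2) * (1 - (cmod v)\<^sup>2))"

lemma Im_from_disk:
  assumes "cmod w < 1"
  shows "Im (from_disk a b w) = b * (1 - (cmod w)\<^sup>2) / (cmod (1 - w))\<^sup>2"
proof -
  have Im_mult_i: "Im (of_real b * \<i> * X) = b * Re X" for X
    by simp
  have "Im (from_disk a b w) = b * Re ((1 + w) / (1 - w))"
    unfolding from_disk_def plus_complex.sel Im_complex_of_real add_0_left by (rule Im_mult_i)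
  also have "Re ((1 + w) / (1 - w)) = (1 - (cmod w)\<^sup>2) / (cmod (1 - w))\<^sup>2"
    unfolding Re_divide' cmod_power2 by (simp add: algebra_simps power2_eq_square)
  finally show ?thesis by simp
qed

lemma from_disk_in_hplane:
  assumes "0 < b" "cmod w < 1"
  shows "from_disk a b w \<in> hplane"
proof -
  have "1 - w \<noteq> 0" using assms(2) by auto
  then show ?thesis
    using assms by (simp add: hplane_def Im_from_disk abs_square_less_1)
qed

lemma from_disk_zero: "from_disk a b 0 = Complex a b"
  by (simp add: from_disk_def complex_eq_iff)

lemma from_disk_diff:
  assumes "cmod w < 1" "cmod v < 1"
  shows "from_disk a b w - from_disk a b v = of_real b * \<i> * (2 * (w - v) / ((1 - w) * (1 - v)))"
proof -
  have "1 - w \<noteq> 0" "1 - v \<noteq> 0" using assms by auto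
  then show ?thesis by (simp add: from_disk_def field_simps)
qed

lemma from_disk_inj:
  assumes "0 < b" "cmod w < 1" "cmod v < 1" "from_disk a b w = from_disk a b v"
  shows "w = v"
  using from_disk_diff[OF assms(2,3), of a b] assms by auto

lemma hdist_from_disk:
  assumes "0 < b" "cmod w < 1" "cmod v < 1"
  shows "hdist (from_disk a b w) (from_disk a b v) = arcosh (1 + disk_kernel w v)"
proof -
  define A where "A = cmod (1 - w)"
  define B where "B = cmod (1 - v)"
  define P where "P = 1 - (cmod w)\<^sup>2"
  define Q where "Q = 1 - (cmod v)\<^sup>2"
  have "0 < A" "0 < B" using assms by (auto simp: A_def B_def)
  moreover have "0 < P" "0 < Q" using assms by (simp_all add: P_def Q_def abs_square_less_1)
  moreover have dist: "cmod (from_disk a b w - from_disk a b v) = 2 * b * cmod (w - v) / (A * B)"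
    unfolding from_disk_diff[OF assms(2,3)] norm_mult norm_divide A_def B_def
    using assms(1) by simp
  moreover have "Im (from_disk a b w) = b * P / A\<^sup>2" "Im (from_disk a b v) = b * Q / B\<^sup>2"
    using assms by (simp_all add: Im_from_disk A_def B_def P_def Q_def)
  ultimately have "(cmod (from_disk a b w - from_disk a b v))\<^sup>2 /
      (2 * Im (from_disk a b w) * Im (from_disk a b v)) = 2 * (cmod (w - v))\<^sup>2 / (P * Q)"
    using assms(1) by (simp only: dist) (simp add: field_simps power2_eq_square)
  also have "\<dots> = disk_kernel w v"
    by (simp add: disk_kernel_def P_def Q_def)
  finally show ?thesis by (simp add: hdist_def)
qed

lemma disk_kernel_nonneg: "cmod w < 1 \<Longrightarrow> cmod v < 1 \<Longrightarrow> 0 \<le> disk_kernel w v"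
  unfolding disk_kernel_def
  by (intro divide_nonneg_pos mult_pos_pos) (auto simp: abs_square_less_1)

lemma hdist_from_disk_less_iff:
  assumes "0 < b" "cmod w < 1" "cmod u < 1" "cmod v < 1"
  shows "hdist (from_disk a b w) (from_disk a b u) < hdist (from_disk a b w) (from_disk a b v) \<longleftrightarrow>
    disk_kernel w u < disk_kernel w v"
  using assms disk_kernel_nonneg[OF assms(2,3)] disk_kernel_nonneg[OF assms(2,4)]
  by (simp add: hdist_from_disk)

lemma to_disk_in_disk:
  assumes "0 < b" "z \<in> hplane"
  shows "cmod (to_disk a b z) < 1"
proof -
  define u where "u = (z - of_real a) / of_real b"
  have "0 < Im u" using assms by (simp add: u_def hplane_def)
  then have "(cmod (u - \<i>))\<^sup>2 < (cmod (u + \<i>))\<^sup>2"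
    unfolding cmod_power2 by (simp add: power2_eq_square algebra_simps)
  then have "cmod (u - \<i>) < cmod (u + \<i>)" by (rule power_less_imp_less_base) simp
  then show ?thesis by (simp add: to_disk_def u_def[symmetric] norm_divide divide_less_eq_1)
qed

lemma from_disk_to_disk:
  assumes "0 < b" "z \<in> hplane"
  shows "from_disk a b (to_disk a b z) = z"
proof -
  define u where "u = (z - of_real a) / of_real b"
  have "0 < Im u" using assms by (simp add: u_def hplane_def)
  then have "u + \<i> \<noteq> 0" by (auto simp: complex_eq_iff)
  then have "1 + (u - \<i>) / (u + \<i>) = 2 * u / (u + \<i>)"
    and "1 - (u - \<i>) / (u + \<i>) = 2 * \<i> / (u + \<i>)"
    by (simp_all add: field_simps)
  moreover have "(2 * u / (u + \<i>)) / (2 * \<i> / (u + \<i>)) = - \<i> * u"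
    using \<open>u + \<i> \<noteq> 0\<close> by (simp add: divide_divide_times_eq)
  ultimately have "from_disk a b (to_disk a b z) = of_real a + of_real b * u"
    by (simp add: from_disk_def to_disk_def u_def[symmetric] mult.assoc complex_i_mult_minus)
  then show ?thesis using assms(1) by (simp add: u_def)
qed

lemma eventually_disk_kernel_less:
  assumes "cmod y < 1" "cmod a < 1" "finite V"
    and "\<forall>v\<in>V. cmod v < 1 \<and> disk_kernel y a < disk_kernel y v"
  shows "eventually (\<lambda>w. \<forall>v\<in>V. disk_kernel w a < disk_kernel w v) (nhds y)"
proof (rule eventually_ball_finite[OF assms(3)], rule ballI)
  fix v assume "v \<in> V"
  then have "1 - (cmod v)\<^sup>2 \<noteq> 0" "1 - (cmod a)\<^sup>2 \<noteq> 0" "1 - (cmod y)\<^sup>2 \<noteq> 0"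
    using assms by (auto simp: abs_square_eq_1)
  then have "((\<lambda>w. disk_kernel w v - disk_kernel w a) \<longlongrightarrow> disk_kernel y v - disk_kernel y a) (nhds y)"
    unfolding disk_kernel_def by (intro tendsto_intros filterlim_ident) auto
  moreover have "0 < disk_kernel y v - disk_kernel y a" using assms(4) \<open>v \<in> V\<close> by simp
  ultimately have "eventually (\<lambda>w. 0 < disk_kernel w v - disk_kernel w a) (nhds y)"
    by (rule order_tendstoD(1))
  then show "eventually (\<lambda>w. disk_kernel w a < disk_kernel w v) (nhds y)"
    by simp
qed

lemma disk_kernel_rcis_tendsto_at_top:
  assumes "cmod a < 1"
  shows "filterlim (\<lambda>\<rho>. disk_kernel a (rcis \<rho> \<theta>)) at_top (at_left 1)"
proof -
  have "eventually (\<lambda>\<rho>. \<rho> \<in> {0<..<1}) (at_left (1::real))"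
    by (rule eventually_at_left_real) simp
  then have ev: "eventually (\<lambda>\<rho>. disk_kernel a (rcis \<rho> \<theta>) =
      2 * (cmod (a - rcis \<rho> \<theta>))\<^sup>2 / ((1 - (cmod a)\<^sup>2) * (1 - \<rho>\<^sup>2))) (at_left (1::real))"
    by eventually_elim (simp add: disk_kernel_def)
  moreover have lim: "filterlim (\<lambda>\<rho>. 2 * (cmod (a - rcis \<rho> \<theta>))\<^sup>2 / ((1 - (cmod a)\<^sup>2) * (1 - \<rho>\<^sup>2)))
      at_top (at_left 1)"
  proof (rule LIM_at_top_divide)
    show "((\<lambda>\<rho>. 2 * (cmod (a - rcis \<rho> \<theta>))\<^sup>2) \<longlongrightarrow> 2 * (cmod (a - rcis 1 \<theta>))\<^sup>2) (at_left 1)"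
      unfolding rcis_def by (intro tendsto_intros)
    have "cmod a < cmod (rcis 1 \<theta>)" using assms by simp
    then show "0 < 2 * (cmod (a - rcis 1 \<theta>))\<^sup>2" by auto
    show "((\<lambda>\<rho>. (1 - (cmod a)\<^sup>2) * (1 - \<rho>\<^sup>2)) \<longlongrightarrow> 0) (at_left (1::real))"
      by (rule tendsto_eq_intros refl | simp)+
    show "eventually (\<lambda>\<rho>. 0 < (1 - (cmod a)\<^sup>2) * (1 - \<rho>\<^sup>2)) (at_left (1::real))"
      using \<open>eventually (\<lambda>\<rho>. \<rho> \<in> {0<..<1}) (at_left 1)\<close>
      by eventually_elim (use assms in \<open>simp add: abs_square_less_1\<close>)
  qed
  ultimately show ?thesis using filterlim_cong[OF refl refl ev] by simp
qed

section \<open>Bisectors of the origin and rays from it\<close>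

(* The bisector of 0 and v in the disk is the zero set of bisector_form v; it is negative on the
   side of 0. *)
definition bisector_form :: "complex \<Rightarrow> complex \<Rightarrow> real" where
  "bisector_form v w = 2 * (w \<bullet> v) - (cmod v)\<^sup>2 * (1 + (cmod w)\<^sup>2)"

lemma disk_kernel_diff_origin:
  assumes "cmod w < 1" "cmod v < 1"
  shows "disk_kernel w v - disk_kernel w 0 =
    - 2 * bisector_form v w / ((1 - (cmod w)\<^sup>2) * (1 - (cmod v)\<^sup>2))"
proof -
  define P where "P = 1 - (cmod w)\<^sup>2"
  define Q where "Q = 1 - (cmod v)\<^sup>2"
  have "0 < P" "0 < Q" using assms by (simp_all add: P_def Q_def abs_square_less_1)
  then have "disk_kernel w v - disk_kernel w 0 = 2 * ((cmod (w - v))\<^sup>2 - (cmod w)\<^sup>2 * Q) / (P * Q)"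
    by (simp add: disk_kernel_def P_def[symmetric] Q_def[symmetric] field_simps)
  also have "(cmod (w - v))\<^sup>2 - (cmod w)\<^sup>2 * Q = - bisector_form v w"
    unfolding bisector_form_def Q_def cmod_power2 inner_complex_def
    by (simp add: algebra_simps power2_eq_square)
  finally show ?thesis by (simp add: P_def Q_def)
qed

lemma disk_kernel_origin_less_iff:
  assumes "cmod w < 1" "cmod v < 1"
  shows "disk_kernel w 0 < disk_kernel w v \<longleftrightarrow> bisector_form v w < 0"
proof -
  have D: "0 < (1 - (cmod w)\<^sup>2) * (1 - (cmod v)\<^sup>2)"
    using assms by (simp add: abs_square_less_1)
  have "disk_kernel w 0 < disk_kernel w v \<longleftrightarrow> 0 < disk_kernel w v - disk_kernel w 0"
    by simp
  then show ?thesis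
    unfolding disk_kernel_diff_origin[OF assms] using D by (auto simp: divide_less_0_iff)
qed

lemma disk_kernel_less_origin_iff:
  assumes "cmod w < 1" "cmod v < 1"
  shows "disk_kernel w v < disk_kernel w 0 \<longleftrightarrow> 0 < bisector_form v w"
proof -
  have D: "0 < (1 - (cmod w)\<^sup>2) * (1 - (cmod v)\<^sup>2)"
    using assms by (simp add: abs_square_less_1)
  have "disk_kernel w v < disk_kernel w 0 \<longleftrightarrow> disk_kernel w v - disk_kernel w 0 < 0"
    by simp
  then show ?thesis
    unfolding disk_kernel_diff_origin[OF assms] using D by (auto simp: zero_less_divide_iff)
qed

lemma bisector_form_rcis:
  "bisector_form v (rcis \<rho> \<theta>) = 2 * \<rho> * (cis \<theta> \<bullet> v) - (cmod v)\<^sup>2 * (1 + \<rho>\<^sup>2)"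
  by (simp add: bisector_form_def inner_complex_def rcis_def norm_mult algebra_simps)

lemma bisector_form_scale:
  assumes "bisector_form v y = 0"
  shows "bisector_form v (of_real l * y) = (cmod v)\<^sup>2 * (l - 1) * (1 - l * (cmod y)\<^sup>2)"
proof -
  have "2 * (y \<bullet> v) = (cmod v)\<^sup>2 * (1 + (cmod y)\<^sup>2)"
    using assms by (simp add: bisector_form_def)
  moreover have "(of_real l * y) \<bullet> v = l * (y \<bullet> v)"
    by (simp add: inner_complex_def algebra_simps)
  ultimately show ?thesis
    by (simp add: bisector_form_def norm_mult power_mult_distrib algebra_simps power2_eq_square)
qed

(* The smaller root of x \<mapsto> 2 * x * c - m * (1 + x\<^sup>2). *)
definition first_root :: "real \<Rightarrow> real \<Rightarrow> real" where
  "first_root m c = (c - sqrt (c\<^sup>2 - m\<^sup>2)) / m"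

lemma first_root_bounds:
  assumes "0 < m" "m < c"
  shows "0 < first_root m c" "first_root m c < 1"
proof -
  define s where "s = sqrt (c\<^sup>2 - m\<^sup>2)"
  have "m\<^sup>2 < c\<^sup>2" using assms by (simp add: power_strict_mono)
  then have s: "0 < s" "s\<^sup>2 = c\<^sup>2 - m\<^sup>2" by (simp_all add: s_def)
  then have "s < c" using assms by (intro power_less_imp_less_base[of s 2 c]) auto
  then show "0 < first_root m c" using assms by (simp add: first_root_def s_def[symmetric])
  have "m * m < c * m" using assms by simp
  then have "(c - m)\<^sup>2 < s\<^sup>2"
    using s(2) by (simp add: power2_eq_square algebra_simps)
  then have "c - m < s" using s(1) power_less_imp_less_base[of "c - m" 2 s] by simp
  then show "first_root m c < 1" using assms by (simp add: first_root_def s_def[symmetric])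
qed

lemma radial_quadratic_factor:
  assumes "0 < m" "m < c"
  shows "2 * x * c - m * (1 + x\<^sup>2) = (x - first_root m c) * (c + sqrt (c\<^sup>2 - m\<^sup>2) - m * x)"
proof -
  have "(sqrt (c\<^sup>2 - m\<^sup>2))\<^sup>2 = c\<^sup>2 - m\<^sup>2"
    using assms by (simp add: power_strict_mono less_imp_le)
  then show ?thesis
    using assms(1) by (simp add: first_root_def field_simps power2_eq_square)
qed

lemma radial_quadratic_less_0_iff:
  assumes "0 < m" "m < c" "x < 1"
  shows "2 * x * c - m * (1 + x\<^sup>2) < 0 \<longleftrightarrow> x < first_root m c"
proof -
  have "m * x < m" "0 \<le> sqrt (c\<^sup>2 - m\<^sup>2)"
    using assms by (simp_all add: power_mono)
  then have "0 < c + sqrt (c\<^sup>2 - m\<^sup>2) - m * x" using assms by linarith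
  then show ?thesis unfolding radial_quadratic_factor[OF assms(1,2)]
    by (simp add: mult_less_0_iff)
qed

lemma radial_quadratic_eq_0_iff:
  assumes "0 < m" "m < c" "x < 1"
  shows "2 * x * c - m * (1 + x\<^sup>2) = 0 \<longleftrightarrow> x = first_root m c"
proof -
  have "m * x < m" "0 \<le> sqrt (c\<^sup>2 - m\<^sup>2)"
    using assms by (simp_all add: power_mono)
  then have "0 < c + sqrt (c\<^sup>2 - m\<^sup>2) - m * x" using assms by linarith
  then show ?thesis unfolding radial_quadratic_factor[OF assms(1,2)] by simp
qed

lemma less_if_radial_quadratic_nonneg:
  fixes m x c :: real
  assumes "0 < m" "0 \<le> x" "x < 1" "0 \<le> 2 * x * c - m * (1 + x\<^sup>2)"
  shows "m < c"
proof (rule ccontr)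
  assume "\<not> m < c"
  then have "2 * x * c - m * (1 + x\<^sup>2) \<le> - m * (1 - x)\<^sup>2"
    using assms(2) mult_left_mono[of c m "2 * x"] by (simp add: power2_eq_square algebra_simps)
  moreover have "0 < m * (1 - x)\<^sup>2" using assms by simp
  ultimately show False using assms(4) by linarith
qed

(* The radius at which the ray from 0 in direction \<theta> meets the bisector of 0 and v. *)
definition ray_crossing :: "complex \<Rightarrow> real \<Rightarrow> real" where
  "ray_crossing v \<theta> = first_root ((cmod v)\<^sup>2) (cis \<theta> \<bullet> v)"

lemma ray_crossing_bounds:
  assumes "v \<noteq> 0" "(cmod v)\<^sup>2 < cis \<theta> \<bullet> v"
  shows "0 < ray_crossing v \<theta>" "ray_crossing v \<theta> < 1"
  using first_root_bounds[OF _ assms(2)] assms(1) by (simp_all add: ray_crossing_def)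

lemma bisector_form_rcis_less_0_iff:
  assumes "v \<noteq> 0" "(cmod v)\<^sup>2 < cis \<theta> \<bullet> v" "\<rho> < 1"
  shows "bisector_form v (rcis \<rho> \<theta>) < 0 \<longleftrightarrow> \<rho> < ray_crossing v \<theta>"
  using radial_quadratic_less_0_iff[OF _ assms(2,3)] assms(1)
  by (simp add: bisector_form_rcis ray_crossing_def)

lemma bisector_form_rcis_eq_0_iff:
  assumes "v \<noteq> 0" "(cmod v)\<^sup>2 < cis \<theta> \<bullet> v" "\<rho> < 1"
  shows "bisector_form v (rcis \<rho> \<theta>) = 0 \<longleftrightarrow> \<rho> = ray_crossing v \<theta>"
  using radial_quadratic_eq_0_iff[OF _ assms(2,3)] assms(1)
  by (simp add: bisector_form_rcis ray_crossing_def)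

lemma ray_crosses_if_bisector_form_nonneg:
  assumes "v \<noteq> 0" "0 \<le> \<rho>" "\<rho> < 1" "0 \<le> bisector_form v (rcis \<rho> \<theta>)"
  shows "(cmod v)\<^sup>2 < cis \<theta> \<bullet> v"
  using less_if_radial_quadratic_nonneg[of "(cmod v)\<^sup>2" \<rho>] assms
  by (simp add: bisector_form_rcis)

lemma isCont_ray_crossing:
  assumes "v \<noteq> 0" "(cmod v)\<^sup>2 < cis \<theta> \<bullet> v"
  shows "isCont (ray_crossing v) \<theta>"
  unfolding ray_crossing_def[abs_def] first_root_def inner_complex_def
  using assms(1) by (intro continuous_intros) auto

lemma inner_inverse_cnj: "x \<bullet> inverse (cnj v) = (x \<bullet> v) / (cmod v)\<^sup>2"
  by (simp add: inverse_eq_divide complex_div_cnj[of 1] inner_complex_def add_divide_distrib)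

lemma inner_inverse_cnj_if_on_bisector:
  assumes "v \<noteq> 0" "0 < \<rho>" "bisector_form v (rcis \<rho> \<theta>) = 0"
  shows "cis \<theta> \<bullet> inverse (cnj v) = (1 + \<rho>\<^sup>2) / (2 * \<rho>)"
  unfolding inner_inverse_cnj using assms by (simp add: bisector_form_rcis field_simps)

section \<open>Angles\<close>

lemma isCont_cis [continuous_intros]: "isCont cis x"
proof -
  have "continuous_on UNIV cis" using continuous_on_cis[OF continuous_on_id] by simp
  then show ?thesis by (simp add: continuous_on_eq_continuous_at)
qed

lemma rcis_inj_on_short_interval:
  assumes "rcis \<rho>1 \<theta>1 = rcis \<rho>2 \<theta>2" "0 < \<rho>1" "0 < \<rho>2" "\<bar>\<theta>1 - \<theta>2\<bar> < 2 * pi"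
  shows "\<theta>1 = \<theta>2"
proof -
  have "\<rho>1 = \<rho>2" using arg_cong[OF assms(1), of cmod] assms(2,3) by simp
  then have "cis \<theta>1 = cis \<theta>2" using assms(1,2) by (simp add: rcis_def)
  then have "cos (\<theta>1 - \<theta>2) = 1"
    by (metis cis.sel(1) cis_divide divide_self_if cis_neq_zero one_complex.sel(1))
  then obtain n :: int where n: "\<theta>1 - \<theta>2 = of_int n * 2 * pi"
    using cos_one_2pi_int by blast
  then have "\<bar>of_int n\<bar> * (2 * pi) < 1 * (2 * pi)"
    using assms(4) by (simp add: abs_mult)
  then have "n = 0" by (subst (asm) mult_less_cancel_right_pos) auto
  then show ?thesis using n by simp
qed

lemma inner_cis_rcis: "cis \<theta> \<bullet> rcis \<rho> \<phi> = \<rho> * cos (\<theta> - \<phi>)"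
  by (simp add: inner_complex_def cos_diff algebra_simps)

lemma inner_cis: "cis \<theta> \<bullet> v = cmod v * cos (\<theta> - Arg v)"
  by (metis inner_cis_rcis rcis_cmod_Arg)

lemma countable_orthogonal_directions:
  assumes "d \<noteq> 0"
  shows "countable {\<theta>. cis \<theta> \<bullet> d = 0}"
proof (rule countable_subset)
  show "{\<theta>. cis \<theta> \<bullet> d = 0} \<subseteq> range (\<lambda>i::int. Arg d + of_int i * (pi / 2))"
  proof
    fix \<theta> assume "\<theta> \<in> {\<theta>. cis \<theta> \<bullet> d = 0}"
    then have "cos (\<theta> - Arg d) = 0" using assms by (simp add: inner_cis)
    then obtain i :: int where "\<theta> - Arg d = of_int i * (pi / 2)"
      by (auto simp: cos_zero_iff_int)
    then show "\<theta> \<in> range (\<lambda>i::int. Arg d + of_int i * (pi / 2))"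
      by (intro image_eqI[of _ _ i]) auto
  qed
qed simp

lemma near_multiple_2pi_if_cos_ge:
  assumes "0 \<le> \<beta>" "\<beta> \<le> pi" "cos \<beta> \<le> cos x"
  shows "\<exists>n::int. \<bar>x - 2 * pi * n\<bar> \<le> \<beta>"
proof -
  define n where "n = \<lfloor>(x + pi) / (2 * pi)\<rfloor>"
  define y where "y = x - 2 * pi * n"
  have "n \<le> (x + pi) / (2 * pi)" "(x + pi) / (2 * pi) < n + 1"
    unfolding n_def by linarith+
  then have "\<bar>y\<bar> \<le> pi" by (simp add: y_def field_simps)
  have "cos (2 * pi * n) = 1" "sin (2 * pi * n) = 0"
    using cos_int_2pin[of n] sin_int_2pin[of n] by (simp_all add: mult.assoc)
  then have "cos \<beta> \<le> cos \<bar>y\<bar>" using assms(3) by (simp add: y_def cos_diff)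
  then have "\<bar>y\<bar> \<le> \<beta>"
    using cos_mono_le_eq[of \<beta> "\<bar>y\<bar>"] assms \<open>\<bar>y\<bar> \<le> pi\<close> by simp
  then show ?thesis unfolding y_def by blast
qed

lemma cos_two_arctan: "cos (2 * arctan q) = (1 - q\<^sup>2) / (1 + q\<^sup>2)"
proof -
  have "0 < 1 + q\<^sup>2" by (simp add: add_pos_nonneg)
  then have "(cos (arctan q))\<^sup>2 = 1 / (1 + q\<^sup>2)" by (simp add: cos_arctan power_divide)
  then show ?thesis using \<open>0 < 1 + q\<^sup>2\<close> unfolding cos_double_cos by (simp add: field_simps)
qed

lemma tanh_eq_cos_two_arctan_exp: "tanh r = cos (2 * arctan (exp (- r)))"
proof -
  have "exp (- 2 * r) = (exp (- r))\<^sup>2" by (simp add: power2_eq_square flip: exp_add)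
  then show ?thesis by (simp add: tanh_real_altdef cos_two_arctan)
qed

lemma cosh_double_tanh: "cosh (2 * x) = (1 + (tanh x)\<^sup>2) / (1 - (tanh x)\<^sup>2)" for x :: real
proof -
  have c: "(cosh x)\<^sup>2 = 1 + (sinh x)\<^sup>2" by (simp add: cosh_square_eq)
  have "0 < 1 + (sinh x)\<^sup>2" by (simp add: add_pos_nonneg)
  moreover have "(tanh x)\<^sup>2 = (sinh x)\<^sup>2 / (1 + (sinh x)\<^sup>2)"
    by (simp add: tanh_def power_divide c)
  ultimately have "(1 + (tanh x)\<^sup>2) / (1 - (tanh x)\<^sup>2) = 1 + 2 * (sinh x)\<^sup>2"
    by (simp only:) (simp add: field_simps)
  then show ?thesis by (simp add: cosh_double c)
qed

lemma le_if_moebius_le: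
  fixes a m :: real
  assumes "a < 1" "m < 1" "(1 + a) / (1 - a) \<le> (1 + m) / (1 - m)"
  shows "a \<le> m"
proof -
  have "(1 + x) / (1 - x) = 2 * inverse (1 - x) - 1" if "x < 1" for x :: real
    using that by (simp add: field_simps)
  then have "inverse (1 - a) \<le> inverse (1 - m)" using assms by simp
  then show ?thesis using assms(1,2) by simp
qed

(* Covering [-2 pi L, 2 pi L] instead of one period avoids wrap-around; the boundary term 3 is
   removed in arc_cover_card by letting L grow. *)
lemma arc_cover_measure_bound:
  fixes \<phi> :: "'a \<Rightarrow> real" and \<beta> :: real and L :: nat
  assumes "finite N" "countable Z" "0 \<le> \<beta>" "\<beta> \<le> pi" "\<forall>t\<in>N. \<bar>\<phi> t\<bar> \<le> pi"
    and cover: "\<forall>\<theta>. \<theta> \<notin> Z \<longrightarrow> (\<exists>t\<in>N. \<exists>n::int. \<bar>\<theta> - \<phi> t - 2 * pi * n\<bar> \<le> \<beta>)"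
  shows "4 * pi * L \<le> card N * (2 * L + 3) * (2 * \<beta>)"
proof -
  define I where "I = N \<times> {- (int L + 1) .. int L + 1}"
  define A where "A = (\<lambda>(t, n::int). {\<phi> t + 2 * pi * n - \<beta> .. \<phi> t + 2 * pi * n + \<beta>})"
  have "finite I" using assms(1) by (simp add: I_def)
  have covered: "{- 2 * pi * L .. 2 * pi * L} - Z \<subseteq> (\<Union>i\<in>I. A i)"
  proof
    fix \<theta> assume \<theta>: "\<theta> \<in> {- 2 * pi * L .. 2 * pi * L} - Z"
    then obtain t and n :: int where t: "t \<in> N" and n: "\<bar>\<theta> - \<phi> t - 2 * pi * n\<bar> \<le> \<beta>"
      using cover by blast
    have "2 * pi * \<bar>n\<bar> \<le> 2 * pi * (L + 1)"
      using \<theta> n assms(4,5) t by (auto simp: abs_le_iff abs_mult algebra_simps)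
    then have "\<bar>n\<bar> \<le> int L + 1" by simp
    then show "\<theta> \<in> (\<Union>i\<in>I. A i)"
      using t n by (intro UN_I[of "(t, n)"]) (auto simp: I_def A_def abs_le_iff)
  qed
  have "ennreal (4 * pi * L) = emeasure lborel {- 2 * pi * L .. 2 * pi * L}"
    by simp
  also have "\<dots> = emeasure lborel ({- 2 * pi * L .. 2 * pi * L} - Z)"
    using assms(2) by (intro emeasure_Diff_null_set[symmetric] countable_imp_null_set_lborel) auto
  also have "\<dots> \<le> emeasure lborel (\<Union>i\<in>I. A i)"
    using \<open>finite I\<close> covered by (intro emeasure_mono) (auto simp: A_def split: prod.splits)
  also have "\<dots> \<le> (\<Sum>i\<in>I. emeasure lborel (A i))"
    using \<open>finite I\<close> by (intro emeasure_subadditive_finite) (auto simp: A_def)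
  also have "\<dots> = (\<Sum>i\<in>I. ennreal (2 * \<beta>))"
    using assms(3) by (intro sum.cong) (auto simp: A_def)
  also have "\<dots> = ennreal (card I * (2 * \<beta>))"
    using assms(3) by (simp add: ennreal_of_nat_eq_real_of_nat ennreal_mult')
  finally have "4 * pi * L \<le> card I * (2 * \<beta>)"
    using assms(3) by (subst (asm) ennreal_le_iff) auto
  moreover have "card I = card N * (2 * L + 3)"
    by (simp add: I_def card_cartesian_product nat_add_distrib nat_mult_distrib)
  ultimately show ?thesis by simp
qed

lemma arc_cover_card:
  fixes \<phi> :: "'a \<Rightarrow> real" and \<beta> :: real
  assumes "finite N" "countable Z" "0 \<le> \<beta>" "\<beta> \<le> pi" "\<forall>t\<in>N. \<bar>\<phi> t\<bar> \<le> pi"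
    and "\<forall>\<theta>. \<theta> \<notin> Z \<longrightarrow> (\<exists>t\<in>N. \<exists>n::int. \<bar>\<theta> - \<phi> t - 2 * pi * n\<bar> \<le> \<beta>)"
  shows "pi \<le> card N * \<beta>"
proof (rule ccontr)
  define c where "c = card N * \<beta>"
  assume "\<not> pi \<le> card N * \<beta>"
  then have "0 < pi - c" by (simp add: c_def)
  obtain L :: nat where "6 * c / (4 * (pi - c)) < L"
    using reals_Archimedean2 by blast
  then have "6 * c < 4 * (pi - c) * L"
    using \<open>0 < pi - c\<close> by (simp add: divide_less_eq mult.commute)
  moreover have "4 * pi * L \<le> card N * (2 * L + 3) * (2 * \<beta>)"
    by (rule arc_cover_measure_bound[OF assms])
  then have "4 * pi * L \<le> 4 * c * L + 6 * c"
    by (simp add: c_def algebra_simps)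
  ultimately show False by (simp add: algebra_simps)
qed

section \<open>The Voronoi cell of a site in disk coordinates\<close>

lemma closure_if_eventually_in:
  assumes "(f \<longlongrightarrow> l) F" "F \<noteq> bot" "eventually (\<lambda>x. f x \<in> A) F"
  shows "l \<in> closure A"
  using closure_subset
  by (intro Lim_in_closed_set[OF closed_closure _ assms(2,1)] eventually_mono[OF assms(3)]) blast

locale voronoi_site =
  fixes S :: "complex set" and s :: complex
  assumes finite_sites: "finite S" and sites_in_hplane: "S \<subseteq> hplane" and site: "s \<in> S"
begin

abbreviation chart :: "complex \<Rightarrow> complex" where
  "chart \<equiv> from_disk (Re s) (Im s)"

abbreviation disk_site :: "complex \<Rightarrow> complex" where
  "disk_site \<equiv> to_disk (Re s) (Im s)"

lemma Im_site_pos: "0 < Im s"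
  using sites_in_hplane site by (auto simp: hplane_def)

lemma chart_in_hplane: "cmod w < 1 \<Longrightarrow> chart w \<in> hplane"
  by (rule from_disk_in_hplane[OF Im_site_pos])

lemma chart_zero: "chart 0 = s"
  by (simp add: from_disk_zero)

lemma disk_site_in_disk: "u \<in> hplane \<Longrightarrow> cmod (disk_site u) < 1"
  by (rule to_disk_in_disk[OF Im_site_pos])

lemma chart_disk_site: "u \<in> hplane \<Longrightarrow> chart (disk_site u) = u"
  by (rule from_disk_to_disk[OF Im_site_pos])

lemma disk_site_eq_0_iff:
  assumes "u \<in> hplane"
  shows "disk_site u = 0 \<longleftrightarrow> u = s"
proof
  show "disk_site u = 0 \<Longrightarrow> u = s"
    using chart_disk_site[OF assms] chart_zero by simp
  have "chart (disk_site s) = chart 0"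
    using chart_disk_site chart_zero site sites_in_hplane by auto
  then show "u = s \<Longrightarrow> disk_site u = 0"
    using from_disk_inj[OF Im_site_pos disk_site_in_disk, of s 0 "Re s"] site sites_in_hplane by auto
qed

lemma disk_site_self: "disk_site s = 0"
  using disk_site_eq_0_iff site sites_in_hplane by auto

lemma disk_site_nonzero: "u \<in> S \<Longrightarrow> u \<noteq> s \<Longrightarrow> disk_site u \<noteq> 0"
  using disk_site_eq_0_iff sites_in_hplane by auto

lemma chart_in_voronoi_cell_iff:
  assumes "cmod w < 1" "t \<in> S"
  shows "chart w \<in> voronoi_cell S t \<longleftrightarrow>
    (\<forall>u\<in>S. u \<noteq> t \<longrightarrow> disk_kernel w (disk_site t) < disk_kernel w (disk_site u))"
proof -
  have "hdist (chart w) t < hdist (chart w) u \<longleftrightarrow>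
      disk_kernel w (disk_site t) < disk_kernel w (disk_site u)" if "u \<in> S" for u
    using hdist_from_disk_less_iff[OF Im_site_pos assms(1) disk_site_in_disk disk_site_in_disk,
        of t u "Re s"] chart_disk_site assms(2) that sites_in_hplane by auto
  then show ?thesis
    using chart_in_hplane[OF assms(1)] by (auto simp: voronoi_cell_def)
qed

lemma chart_in_own_cell_iff:
  assumes "cmod w < 1"
  shows "chart w \<in> voronoi_cell S s \<longleftrightarrow> (\<forall>u\<in>S. u \<noteq> s \<longrightarrow> bisector_form (disk_site u) w < 0)"
  using chart_in_voronoi_cell_iff[OF assms site] disk_site_self sites_in_hplane
    disk_kernel_origin_less_iff[OF assms disk_site_in_disk] by auto

lemma chart_in_cells_by_bisector_sign:
  assumes t: "t \<in> S" "t \<noteq> s" and w: "cmod w < 1"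
    and others: "\<forall>u\<in>S - {s, t}. disk_kernel w 0 < disk_kernel w (disk_site u) \<and>
      disk_kernel w (disk_site t) < disk_kernel w (disk_site u)"
  shows "bisector_form (disk_site t) w < 0 \<Longrightarrow> chart w \<in> voronoi_cell S s"
    and "0 < bisector_form (disk_site t) w \<Longrightarrow> chart w \<in> voronoi_cell S t"
proof -
  have in_disk: "cmod (disk_site u) < 1" if "u \<in> S" for u
    using that sites_in_hplane disk_site_in_disk by auto
  then have origin_less: "disk_kernel w 0 < disk_kernel w (disk_site u) \<longleftrightarrow>
      bisector_form (disk_site u) w < 0" if "u \<in> S" for u
    using disk_kernel_origin_less_iff[OF w] that by blast
  show "chart w \<in> voronoi_cell S s" if "bisector_form (disk_site t) w < 0"
    unfolding chart_in_own_cell_iff[OF w]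
  proof (intro ballI impI)
    fix u assume "u \<in> S" "u \<noteq> s"
    then show "bisector_form (disk_site u) w < 0"
      using that others origin_less by (cases "u = t") auto
  qed
  show "chart w \<in> voronoi_cell S t" if "0 < bisector_form (disk_site t) w"
    unfolding chart_in_voronoi_cell_iff[OF w t(1)]
  proof (intro ballI impI)
    fix u assume "u \<in> S" "u \<noteq> t"
    then show "disk_kernel w (disk_site t) < disk_kernel w (disk_site u)"
      using that others disk_site_self disk_kernel_less_origin_iff[OF w in_disk[OF t(1)]]
      by (cases "u = s") auto
  qed
qed

lemma eventually_others_farther:
  assumes t: "t \<in> S" "t \<noteq> s" and y: "cmod y < 1"
    and on_bisector: "bisector_form (disk_site t) y = 0"
    and others: "\<forall>u\<in>S. u \<noteq> s \<and> u \<noteq> t \<longrightarrow> bisector_form (disk_site u) y < 0"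
  shows "eventually (\<lambda>w. cmod w < 1 \<and> (\<forall>u\<in>S - {s, t}. disk_kernel w 0 < disk_kernel w (disk_site u) \<and>
      disk_kernel w (disk_site t) < disk_kernel w (disk_site u))) (nhds y)"
proof -
  define v where "v = disk_site t"
  define V where "V = disk_site ` (S - {s, t})"
  have v: "cmod v < 1" using t sites_in_hplane by (auto simp: v_def disk_site_in_disk)
  have "disk_kernel y v = disk_kernel y 0"
    using disk_kernel_diff_origin[OF y v] on_bisector by (simp add: v_def)
  moreover have "\<forall>x\<in>V. cmod x < 1 \<and> disk_kernel y 0 < disk_kernel y x"
    using others sites_in_hplane disk_kernel_origin_less_iff[OF y disk_site_in_disk]
    by (auto simp: V_def disk_site_in_disk)
  moreover have "finite V" using finite_sites by (simp add: V_def)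
  ultimately have "eventually (\<lambda>w. \<forall>x\<in>V. disk_kernel w 0 < disk_kernel w x) (nhds y)"
    and "eventually (\<lambda>w. \<forall>x\<in>V. disk_kernel w v < disk_kernel w x) (nhds y)"
    using eventually_disk_kernel_less[OF y] v by auto
  moreover have "eventually (\<lambda>w. cmod w < 1) (nhds y)"
    using y by (intro order_tendstoD(2)[OF tendsto_norm[OF filterlim_ident]])
  ultimately show ?thesis
    by eventually_elim (auto simp: V_def v_def)
qed

lemma eventually_scaled_in_cells:
  assumes t: "t \<in> S" "t \<noteq> s" and y: "cmod y < 1"
    and on_bisector: "bisector_form (disk_site t) y = 0"
    and others: "\<forall>u\<in>S. u \<noteq> s \<and> u \<noteq> t \<longrightarrow> bisector_form (disk_site u) y < 0"
  shows "eventually (\<lambda>l. chart (of_real l * y) \<in> voronoi_cell S s) (at_left 1)"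
    and "eventually (\<lambda>l. chart (of_real l * y) \<in> voronoi_cell S t) (at_right 1)"
proof -
  define m where "m = (cmod (disk_site t))\<^sup>2"
  have "0 < m"
    using t sites_in_hplane disk_site_eq_0_iff by (auto simp: m_def)
  have sign: "bisector_form (disk_site t) (of_real l * y) = m * (l - 1) * (1 - l * (cmod y)\<^sup>2)"
    for l using bisector_form_scale[OF on_bisector] by (simp add: m_def)
  have "((\<lambda>l::real. of_real l * y) \<longlongrightarrow> of_real 1 * y) (at 1)" by (intro tendsto_intros)
  then have "filterlim (\<lambda>l::real. of_real l * y) (nhds y) (at 1)" by simp
  from eventually_compose_filterlim[OF eventually_others_farther[OF assms] this]
  have near: "eventually (\<lambda>l. (bisector_form (disk_site t) (of_real l * y) < 0 \<longrightarrow>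
      chart (of_real l * y) \<in> voronoi_cell S s) \<and> (0 < bisector_form (disk_site t) (of_real l * y) \<longrightarrow>
      chart (of_real l * y) \<in> voronoi_cell S t)) (at (1::real))"
    by eventually_elim (use chart_in_cells_by_bisector_sign[OF t] in blast)
  have "(cmod y)\<^sup>2 < 1" using y by (simp add: abs_square_less_1)
  have "eventually (\<lambda>l. l \<in> {0<..<1}) (at_left (1::real))"
    by (rule eventually_at_left_real) simp
  then show "eventually (\<lambda>l. chart (of_real l * y) \<in> voronoi_cell S s) (at_left 1)"
    using filter_leD[OF at_within_le_at near]
  proof eventually_elim
    case (elim l)
    then have "l * (cmod y)\<^sup>2 < 1"
      using \<open>(cmod y)\<^sup>2 < 1\<close> mult_strict_mono[of l 1 "(cmod y)\<^sup>2" 1] by simp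
    then have "m * (l - 1) * (1 - l * (cmod y)\<^sup>2) < 0"
      using elim(1) \<open>0 < m\<close> by (intro mult_neg_pos mult_pos_neg) auto
    then show ?case using elim(2) unfolding sign by simp
  qed
  have "((\<lambda>l::real. l * (cmod y)\<^sup>2) \<longlongrightarrow> 1 * (cmod y)\<^sup>2) (at_right 1)"
    by (intro tendsto_intros)
  then have "eventually (\<lambda>l. l * (cmod y)\<^sup>2 < 1) (at_right (1::real))"
    using order_tendstoD(2) \<open>(cmod y)\<^sup>2 < 1\<close> by simp
  moreover have "eventually (\<lambda>l. 1 < l) (at_right (1::real))"
    by (simp add: eventually_at_right_less)
  moreover note filter_leD[OF at_within_le_at near]
  ultimately show "eventually (\<lambda>l. chart (of_real l * y) \<in> voronoi_cell S t) (at_right 1)"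
    by eventually_elim (use \<open>0 < m\<close> in \<open>simp add: sign\<close>)
qed

lemma chart_in_common_boundary:
  assumes t: "t \<in> S" "t \<noteq> s" and y: "cmod y < 1"
    and on_bisector: "bisector_form (disk_site t) y = 0"
    and others: "\<forall>u\<in>S. u \<noteq> s \<and> u \<noteq> t \<longrightarrow> bisector_form (disk_site u) y < 0"
  shows "chart y \<in> common_boundary S s t"
proof -
  have "1 - y \<noteq> 0" using y by auto
  then have "((\<lambda>l::real. chart (of_real l * y)) \<longlongrightarrow> chart (of_real 1 * y)) (at 1)"
    unfolding from_disk_def by (intro tendsto_intros) auto
  then have lim: "((\<lambda>l::real. chart (of_real l * y)) \<longlongrightarrow> chart y) (at 1)" by simp
  have "chart y \<in> closure (voronoi_cell S s)"
    using closure_if_eventually_in[OF _ trivial_limit_at_left_real eventually_scaled_in_cells(1)[OF assms]]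
      tendsto_mono[OF at_within_le_at lim] by blast
  moreover have "chart y \<in> closure (voronoi_cell S t)"
    using closure_if_eventually_in[OF _ trivial_limit_at_right_real eventually_scaled_in_cells(2)[OF assms]]
      tendsto_mono[OF at_within_le_at lim] by blast
  ultimately show ?thesis
    using chart_in_hplane[OF y] by (simp add: common_boundary_def)
qed

lemma eventually_first_crossing_nearby:
  assumes t: "t \<in> S" "t \<noteq> s" and "0 \<le> \<tau>" "\<tau> < 1"
    and on_bisector: "bisector_form (disk_site t) (rcis \<tau> \<theta>) = 0"
    and others: "\<forall>u\<in>S. u \<noteq> s \<and> u \<noteq> t \<longrightarrow> bisector_form (disk_site u) (rcis \<tau> \<theta>) < 0"
  shows "eventually (\<lambda>x. (cmod (disk_site t))\<^sup>2 < cis x \<bullet> disk_site t \<and>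
    (\<forall>u\<in>S - {s, t}. bisector_form (disk_site u) (rcis (ray_crossing (disk_site t) x) x) < 0))
    (at \<theta>)"
proof -
  define v where "v = disk_site t"
  have "v \<noteq> 0" using disk_site_nonzero t by (simp add: v_def)
  have cross: "(cmod v)\<^sup>2 < cis \<theta> \<bullet> v"
    using ray_crosses_if_bisector_form_nonneg[OF \<open>v \<noteq> 0\<close>] assms(3,4) on_bisector by (simp add: v_def)
  have "\<tau> = ray_crossing v \<theta>"
    using bisector_form_rcis_eq_0_iff[OF \<open>v \<noteq> 0\<close> cross \<open>\<tau> < 1\<close>] on_bisector by (simp add: v_def)
  have "isCont (\<lambda>x. cis x \<bullet> v) \<theta>"
    by (intro continuous_intros)
  then have "eventually (\<lambda>x. (cmod v)\<^sup>2 < cis x \<bullet> v) (at \<theta>)"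
    using cross by (intro order_tendstoD(1)) (auto simp: isCont_def)
  moreover have "eventually (\<lambda>x. \<forall>u\<in>S - {s, t}. bisector_form (disk_site u) (rcis (ray_crossing v x) x) < 0) (at \<theta>)"
  proof (rule eventually_ball_finite, use finite_sites in simp, rule ballI)
    fix u assume "u \<in> S - {s, t}"
    have "isCont (\<lambda>x. bisector_form (disk_site u) (rcis (ray_crossing v x) x)) \<theta>"
      unfolding bisector_form_def rcis_def
      by (intro continuous_intros isCont_ray_crossing[OF \<open>v \<noteq> 0\<close> cross])
    moreover have "bisector_form (disk_site u) (rcis (ray_crossing v \<theta>) \<theta>) < 0"
      using others \<open>u \<in> S - {s, t}\<close> \<open>\<tau> = ray_crossing v \<theta>\<close> by auto
    ultimately show "eventually (\<lambda>x. bisector_form (disk_site u) (rcis (ray_crossing v x) x) < 0) (at \<theta>)"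
      by (intro order_tendstoD(2)) (auto simp: isCont_def)
  qed
  ultimately show ?thesis by (simp add: v_def eventually_conj_iff)
qed

(* The crossing points of nearby rays with the bisector of t lie in the common boundary and are
   pairwise distinct. *)
lemma delaunay_adj_if_first_crossing:
  assumes t: "t \<in> S" "t \<noteq> s" and "0 \<le> \<tau>" "\<tau> < 1"
    and on_bisector: "bisector_form (disk_site t) (rcis \<tau> \<theta>) = 0"
    and others: "\<forall>u\<in>S. u \<noteq> s \<and> u \<noteq> t \<longrightarrow> bisector_form (disk_site u) (rcis \<tau> \<theta>) < 0"
  shows "delaunay_adj S s t"
proof -
  define v where "v = disk_site t"
  define y where "y x = rcis (ray_crossing v x) x" for x
  have "v \<noteq> 0" using disk_site_nonzero t by (simp add: v_def)
  obtain d where "0 < d" and near: "\<And>x. x \<noteq> \<theta> \<Longrightarrow> dist x \<theta> < d \<Longrightarrow>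
      (cmod v)\<^sup>2 < cis x \<bullet> v \<and> (\<forall>u\<in>S - {s, t}. bisector_form (disk_site u) (y x) < 0)"
    using eventually_first_crossing_nearby[OF assms] unfolding eventually_at y_def v_def by blast
  define I where "I = {\<theta><..<\<theta> + min d 1}"
  have y: "0 < ray_crossing v x \<and> ray_crossing v x < 1 \<and> chart (y x) \<in> common_boundary S s t"
    if "x \<in> I" for x
  proof -
    have "x \<noteq> \<theta>" "dist x \<theta> < d" using that by (auto simp: I_def dist_real_def)
    then have cross: "(cmod v)\<^sup>2 < cis x \<bullet> v"
      and "\<forall>u\<in>S - {s, t}. bisector_form (disk_site u) (y x) < 0"
      using near by auto
    moreover have "0 < ray_crossing v x" "ray_crossing v x < 1"
      using ray_crossing_bounds[OF \<open>v \<noteq> 0\<close> cross] by auto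
    moreover have "bisector_form v (y x) = 0"
      using bisector_form_rcis_eq_0_iff[OF \<open>v \<noteq> 0\<close> cross] \<open>ray_crossing v x < 1\<close>
      by (simp add: y_def)
    ultimately show ?thesis
      using chart_in_common_boundary[OF t, of "y x"] by (simp add: y_def v_def)
  qed
  have "inj_on (\<lambda>x. chart (y x)) I"
  proof (rule inj_onI)
    fix x1 x2 assume x: "x1 \<in> I" "x2 \<in> I" and eq: "chart (y x1) = chart (y x2)"
    have "cmod (y x1) < 1" "cmod (y x2) < 1" using y[OF x(1)] y[OF x(2)] by (simp_all add: y_def)
    then have "y x1 = y x2" using from_disk_inj[OF Im_site_pos _ _ eq] by blast
    moreover have "\<bar>x1 - x2\<bar> < 2 * pi"
      using x pi_gt3 by (auto simp: I_def)
    ultimately show "x1 = x2"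
      using rcis_inj_on_short_interval y x by (simp add: y_def)
  qed
  moreover have "infinite I" using \<open>0 < d\<close> by (simp add: I_def)
  ultimately have "infinite ((\<lambda>x. chart (y x)) ` I)" by (simp add: finite_image_iff)
  moreover have "(\<lambda>x. chart (y x)) ` I \<subseteq> common_boundary S s t" using y by auto
  ultimately show ?thesis
    using t site by (auto simp: delaunay_adj_def dest: finite_subset)
qed

lemma not_hbounded_if_ray_in_cell:
  assumes "\<forall>\<rho>. 0 \<le> \<rho> \<and> \<rho> < 1 \<longrightarrow> chart (rcis \<rho> \<theta>) \<in> voronoi_cell S s"
  shows "\<not> hbounded (voronoi_cell S s)"
proof
  assume "hbounded (voronoi_cell S s)"
  then obtain c R where c: "c \<in> hplane" and R: "\<forall>p\<in>voronoi_cell S s. hdist c p \<le> R"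
    unfolding hbounded_def by blast
  define a where "a = disk_site c"
  have a: "cmod a < 1" "chart a = c"
    using disk_site_in_disk[OF c] chart_disk_site[OF c] by (simp_all add: a_def)
  define M where "M = max R 0"
  have "eventually (\<lambda>\<rho>. cosh M - 1 < disk_kernel a (rcis \<rho> \<theta>)) (at_left (1::real))"
    using disk_kernel_rcis_tendsto_at_top[OF a(1)] by (simp add: filterlim_at_top_dense)
  moreover have "eventually (\<lambda>\<rho>. \<rho> \<in> {0<..<1}) (at_left (1::real))"
    by (rule eventually_at_left_real) simp
  ultimately have "\<exists>\<rho>. cosh M - 1 < disk_kernel a (rcis \<rho> \<theta>) \<and> \<rho> \<in> {0<..<1}"
    using eventually_happens'[OF trivial_limit_at_left_real eventually_conj] by blast
  then obtain \<rho> where \<rho>: "0 < \<rho>" "\<rho> < 1" "cosh M < 1 + disk_kernel a (rcis \<rho> \<theta>)"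
    by auto
  have "M = arcosh (cosh M)" by (simp add: M_def arcosh_cosh_real)
  also have "\<dots> < arcosh (1 + disk_kernel a (rcis \<rho> \<theta>))"
    using \<rho>(3) by (intro arcosh_real_strict_mono) (simp_all add: cosh_real_ge_1)
  also have "\<dots> = hdist c (chart (rcis \<rho> \<theta>))"
    using hdist_from_disk[OF Im_site_pos a(1), of "rcis \<rho> \<theta>" "Re s"] \<rho> a(2) by simp
  also have "\<dots> \<le> R" using R assms \<rho> by simp
  finally show False by (simp add: M_def)
qed

lemma ray_meets_bisector_if_hbounded:
  assumes "hbounded (voronoi_cell S s)"
  obtains u \<rho> where "u \<in> S" "u \<noteq> s" "0 \<le> \<rho>" "\<rho> < 1" "0 \<le> bisector_form (disk_site u) (rcis \<rho> \<theta>)"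
proof -
  have "\<not> (\<forall>\<rho>. 0 \<le> \<rho> \<and> \<rho> < 1 \<longrightarrow> chart (rcis \<rho> \<theta>) \<in> voronoi_cell S s)"
    using not_hbounded_if_ray_in_cell assms by blast
  then show ?thesis
    using that by (auto simp: chart_in_own_cell_iff not_less)
qed

(* Directions in which the ray from 0 may meet the bisectors of two different sites at the same
   point (cf. inner_inverse_cnj_if_on_bisector). *)
definition degenerate_directions :: "real set" where
  "degenerate_directions = {\<theta>. \<exists>u\<in>S - {s}. \<exists>u'\<in>S - {s}. u \<noteq> u' \<and>
    cis \<theta> \<bullet> inverse (cnj (disk_site u)) = cis \<theta> \<bullet> inverse (cnj (disk_site u'))}"

lemma countable_degenerate_directions: "countable degenerate_directions"
proof -
  define d where "d u u' = inverse (cnj (disk_site u)) - inverse (cnj (disk_site u'))" for u u'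
  have "d u u' \<noteq> 0" if "u \<in> S" "u' \<in> S" "u \<noteq> u'" for u u'
  proof -
    have "disk_site u \<noteq> disk_site u'"
      using that chart_disk_site sites_in_hplane by (metis subsetD)
    then show ?thesis by (simp add: d_def)
  qed
  then have "countable {\<theta>. cis \<theta> \<bullet> d u u' = 0}" if "u \<in> S" "u' \<in> S - {u}" for u u'
    using that by (intro countable_orthogonal_directions) auto
  then have "countable (\<Union>u\<in>S. \<Union>u'\<in>S - {u}. {\<theta>. cis \<theta> \<bullet> d u u' = 0})"
    using finite_sites by (intro countable_UN[OF countable_finite]) auto
  moreover have "degenerate_directions \<subseteq> (\<Union>u\<in>S. \<Union>u'\<in>S - {u}. {\<theta>. cis \<theta> \<bullet> d u u' = 0})"
    by (auto simp: degenerate_directions_def d_def inner_diff_right)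
  ultimately show ?thesis by (rule countable_subset[rotated])
qed

lemma degenerate_if_common_crossing:
  assumes "u \<in> S" "u \<noteq> s" "u' \<in> S" "u' \<noteq> s" "u \<noteq> u'" "0 < \<rho>"
    and "bisector_form (disk_site u) (rcis \<rho> \<theta>) = 0" "bisector_form (disk_site u') (rcis \<rho> \<theta>) = 0"
  shows "\<theta> \<in> degenerate_directions"
proof -
  have "cis \<theta> \<bullet> inverse (cnj (disk_site u)) = cis \<theta> \<bullet> inverse (cnj (disk_site u'))"
    using assms inner_inverse_cnj_if_on_bisector[OF disk_site_nonzero] by simp
  then show ?thesis using assms(1-5) unfolding degenerate_directions_def by blast
qed

(* t is the site whose bisector the ray of direction \<theta> meets first. *)
lemma delaunay_neighbour_in_direction:
  assumes "hbounded (voronoi_cell S s)" "\<theta> \<notin> degenerate_directions"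
  obtains t where "delaunay_adj S s t" "(cmod (disk_site t))\<^sup>2 \<le> cis \<theta> \<bullet> disk_site t"
proof -
  define B where "B = {u \<in> S - {s}. (cmod (disk_site u))\<^sup>2 < cis \<theta> \<bullet> disk_site u}"
  define \<rho> where "\<rho> u = ray_crossing (disk_site u) \<theta>" for u
  have crosses: "u \<in> B" if "u \<in> S" "u \<noteq> s" "0 \<le> r" "r < 1"
    "0 \<le> bisector_form (disk_site u) (rcis r \<theta>)" for u r
    using ray_crosses_if_bisector_form_nonneg[OF disk_site_nonzero] that by (simp add: B_def)
  obtain t where "t \<in> B" and t_min: "\<forall>u\<in>B. \<rho> t \<le> \<rho> u"
  proof -
    obtain u r where "u \<in> S" "u \<noteq> s" "0 \<le> r" "r < 1" "0 \<le> bisector_form (disk_site u) (rcis r \<theta>)"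
      using ray_meets_bisector_if_hbounded[OF assms(1)] .
    then have "B \<noteq> {}" using crosses by blast
    moreover have "finite B" using finite_sites by (simp add: B_def)
    ultimately show ?thesis
      using that arg_min_if_finite[of B \<rho>] by (metis not_less)
  qed
  then have t: "t \<in> S" "t \<noteq> s" "disk_site t \<noteq> 0"
    and cross: "(cmod (disk_site t))\<^sup>2 < cis \<theta> \<bullet> disk_site t"
    using disk_site_nonzero by (auto simp: B_def)
  have \<tau>: "0 < \<rho> t" "\<rho> t < 1"
    using ray_crossing_bounds[OF t(3) cross] by (simp_all add: \<rho>_def)
  have on_bisector: "bisector_form (disk_site t) (rcis (\<rho> t) \<theta>) = 0"
    using bisector_form_rcis_eq_0_iff[OF t(3) cross \<tau>(2)] by (simp add: \<rho>_def)
  have "bisector_form (disk_site u) (rcis (\<rho> t) \<theta>) < 0" if u: "u \<in> S" "u \<noteq> s" "u \<noteq> t" for u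
  proof (rule ccontr)
    assume "\<not> bisector_form (disk_site u) (rcis (\<rho> t) \<theta>) < 0"
    then have nonneg: "0 \<le> bisector_form (disk_site u) (rcis (\<rho> t) \<theta>)" by simp
    then have "u \<in> B" using crosses[OF u(1,2) _ \<tau>(2)] \<tau>(1) by simp
    then have "\<rho> u = \<rho> t"
      using t_min nonneg bisector_form_rcis_less_0_iff[OF disk_site_nonzero, of u \<theta> "\<rho> t"] u \<tau>
      by (force simp: B_def \<rho>_def)
    then have "bisector_form (disk_site u) (rcis (\<rho> t) \<theta>) = 0"
      using bisector_form_rcis_eq_0_iff[OF disk_site_nonzero, of u \<theta> "\<rho> t"] u \<tau> \<open>u \<in> B\<close>
      by (simp add: B_def \<rho>_def)
    then show False
      using degenerate_if_common_crossing[OF u(1,2) t(1,2) u(3) \<tau>(1) _ on_bisector] assms(2) by simp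
  qed
  then have "delaunay_adj S s t"
    using delaunay_adj_if_first_crossing[OF t(1,2) _ \<tau>(2) on_bisector] \<tau> by auto
  then show ?thesis using that cross by simp
qed

lemma tanh_le_norm_disk_site:
  assumes "u \<in> S" "2 * r \<le> hdist s u"
  shows "tanh r \<le> cmod (disk_site u)"
proof (cases "0 < r")
  case True
  define m where "m = (cmod (disk_site u))\<^sup>2"
  have "cmod (disk_site u) < 1" using assms(1) sites_in_hplane disk_site_in_disk by auto
  then have m: "0 \<le> m" "m < 1" by (simp_all add: m_def abs_square_less_1)
  have "hdist s u = hdist (chart 0) (chart (disk_site u))"
    using assms(1) sites_in_hplane chart_disk_site chart_zero by auto
  also have "\<dots> = arcosh (1 + 2 * m / (1 - m))"
    using hdist_from_disk[OF Im_site_pos _ \<open>cmod (disk_site u) < 1\<close>, of 0 "Re s"]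
    by (simp add: disk_kernel_def m_def)
  also have "1 + 2 * m / (1 - m) = (1 + m) / (1 - m)"
    using m by (simp add: field_simps)
  finally have "2 * r \<le> arcosh ((1 + m) / (1 - m))" using assms(2) by simp
  moreover have "1 \<le> (1 + m) / (1 - m)" using m by simp
  ultimately have "cosh (2 * r) \<le> (1 + m) / (1 - m)"
    using True cosh_real_nonneg_le_iff[of "2 * r" "arcosh ((1 + m) / (1 - m))"]
    by simp
  moreover have "(tanh r)\<^sup>2 < 1"
    using tanh_real_lt_1[of r] tanh_real_gt_neg1[of r] by (simp add: abs_square_less_1)
  ultimately have "(tanh r)\<^sup>2 \<le> m"
    using le_if_moebius_le m(2) unfolding cosh_double_tanh by blast
  then show ?thesis
    unfolding m_def by (rule power2_le_imp_le) simp
next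
  case False
  then have "tanh r \<le> 0" by simp
  then show ?thesis using norm_ge_zero[of "disk_site u"] by linarith
qed

lemma delaunay_neighbours_cover_directions:
  assumes "hbounded (voronoi_cell S s)"
    and separated: "\<forall>u\<in>S. u \<noteq> s \<longrightarrow> 2 * r \<le> hdist s u"
  shows "\<forall>\<theta>. \<theta> \<notin> degenerate_directions \<longrightarrow> (\<exists>t\<in>{t \<in> S. delaunay_adj S s t}.
    \<exists>n::int. \<bar>\<theta> - Arg (disk_site t) - 2 * pi * n\<bar> \<le> 2 * exp (- r))"
proof (intro allI impI)
  fix \<theta> assume "\<theta> \<notin> degenerate_directions"
  then obtain t where adj: "delaunay_adj S s t"
    and cross: "(cmod (disk_site t))\<^sup>2 \<le> cis \<theta> \<bullet> disk_site t"
    by (rule delaunay_neighbour_in_direction[OF assms(1)])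
  define v where "v = disk_site t"
  have t: "t \<in> S" "t \<noteq> s" using adj by (auto simp: delaunay_adj_def)
  then have "0 < cmod v" using disk_site_nonzero by (simp add: v_def)
  have "cos (2 * arctan (exp (- r))) = tanh r" by (simp add: tanh_eq_cos_two_arctan_exp)
  also have "\<dots> \<le> cmod v" using tanh_le_norm_disk_site t separated by (simp add: v_def)
  also have "\<dots> \<le> cos (\<theta> - Arg v)"
    using cross \<open>0 < cmod v\<close> by (simp add: inner_cis power2_eq_square v_def)
  finally have "cos (2 * arctan (exp (- r))) \<le> cos (\<theta> - Arg v)" .
  moreover have "0 \<le> 2 * arctan (exp (- r))" "2 * arctan (exp (- r)) \<le> pi"
    using arctan_ubound[of "exp (- r)"] by simp_all
  ultimately obtain n :: int where "\<bar>\<theta> - Arg v - 2 * pi * n\<bar> \<le> 2 * arctan (exp (- r))"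
    using near_multiple_2pi_if_cos_ge by blast
  also have "\<dots> \<le> 2 * exp (- r)" using arctan_le_self[of "exp (- r)"] by simp
  finally have "\<bar>\<theta> - Arg (disk_site t) - 2 * pi * n\<bar> \<le> 2 * exp (- r)" by (simp add: v_def)
  then show "\<exists>t\<in>{t \<in> S. delaunay_adj S s t}.
      \<exists>n::int. \<bar>\<theta> - Arg (disk_site t) - 2 * pi * n\<bar> \<le> 2 * exp (- r)"
    using adj t(1) by blast
qed

end

theorem lemma12:
  fixes r :: real and S :: "complex set" and s :: complex
  assumes "r > 0"
    and "finite S" and "S \<subseteq> hplane"
    and "\<forall>a\<in>S. \<forall>b\<in>S. a \<noteq> b \<longrightarrow> hdist a b \<ge> 2 * r"
    and "s \<in> S"
    and "hbounded (voronoi_cell S s)"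
  shows "exp r \<le> real (delaunay_degree S s)"
proof -
  interpret voronoi_site S s using assms(2,3,5) by unfold_locales
  define N where "N = {t \<in> S. delaunay_adj S s t}"
  have separated: "\<forall>u\<in>S. u \<noteq> s \<longrightarrow> 2 * r \<le> hdist s u" using assms(4,5) by fastforce
  have "pi \<le> card N * (2 * exp (- r))"
  proof (rule arc_cover_card)
    show "finite N" using assms(2) by (simp add: N_def)
    show "countable degenerate_directions" by (rule countable_degenerate_directions)
    have "exp (- r) < 1" using assms(1) by simp
    then show "0 \<le> 2 * exp (- r)" "2 * exp (- r) \<le> pi" using pi_gt3 by (simp, linarith)
    have "\<bar>Arg z\<bar> \<le> pi" for z using Arg_bounded[of z] by linarith
    then show "\<forall>t\<in>N. \<bar>Arg (disk_site t)\<bar> \<le> pi" by simp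
    show "\<forall>\<theta>. \<theta> \<notin> degenerate_directions \<longrightarrow>
        (\<exists>t\<in>N. \<exists>n::int. \<bar>\<theta> - Arg (disk_site t) - 2 * pi * n\<bar> \<le> 2 * exp (- r))"
      unfolding N_def by (rule delaunay_neighbours_cover_directions[OF assms(6) separated])
  qed
  then have "pi / 2 * exp r \<le> card N"
    by (simp add: exp_minus field_simps)
  moreover have "exp r \<le> pi / 2 * exp r" using pi_gt3 by simp
  ultimately have "exp r \<le> card N" by linarith
  then show ?thesis by (simp add: delaunay_degree_def N_def)
qed

end
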